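(* Let $a\in\mathbb D$ and $0\le\gamma<2\pi$, and put $a'=|1+a|-1$ and $\gamma_a=\arg(1+\overline a)$. Let $f=h+\overline g\in\mathcal S(H^a_\gamma)$ and assume $g'(0)=a'e^{2i(\gamma+\gamma_a)}$. Then $a'\in(-1,1)$, $|g'(0)|<1$, and for all $z\in\mathbb D$ $$h(z)+e^{-2i(\gamma+\gamma_a)}g(z)=\frac{(1+a')z}{1-e^{i(\gamma+\gamma_a)}z}.$$
   Context: $\mathbb D$ is the open unit disk. A harmonic map $f$ on $\mathbb D$ is written canonically as $f=h+\overline g$ with $h,g$ analytic in $\mathbb D$ and $g(0)=0$. $\mathcal H$ is the set of such $f$ with $h(0)=g(0)=0$ and $h'(0)=1$. $f$ is sense-preserving if $|h'(z)|>|g'(z)|$ on $\mathbb D$. $\mathcal S_H$ is the set of sense-preserving univalent $f\in\mathcal H$. For $a\in\mathbb D$ and $0\le\gamma<2\pi$, $H^a_\gamma=\{w\in\mathbb C:\ \mathrm{Re}\big(\tfrac{e^{i\gamma}}{1+a}w\big)>-\tfrac12\}$ and $\mathcal S(H^a_\gamma)$ denotes the set of $f\in\mathcal S_H$ with $f(\mathbb D)=H^a_\gamma$ (slanted half-plane mappings). Here $\gamma_a=\arg(1+\overline a)$, so $1+a=|1+a|e^{-i\gamma_a}$. *)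

theory Defs
  imports "HOL-Analysis.Analysis"
begin

definition harmonic_f :: "(complex \<Rightarrow> complex) \<Rightarrow> (complex \<Rightarrow> complex) \<Rightarrow> complex \<Rightarrow> complex" where
  "harmonic_f h g = (\<lambda>z. h z + cnj (g z))"

definition in_SH :: "(complex \<Rightarrow> complex) \<Rightarrow> (complex \<Rightarrow> complex) \<Rightarrow> bool" where
  "in_SH h g \<longleftrightarrow>
     h holomorphic_on ball 0 1 \<and> g holomorphic_on ball 0 1 \<and>
     h 0 = 0 \<and> g 0 = 0 \<and> deriv h 0 = 1 \<and>
     (\<forall>z\<in>ball 0 1. norm (deriv g z) < norm (deriv h z)) \<and>
     inj_on (harmonic_f h g) (ball 0 1)"

definition slanted_halfplane :: "complex \<Rightarrow> real \<Rightarrow> complex set" where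
  "slanted_halfplane a \<gamma> = {w. Re (exp (\<i> * complex_of_real \<gamma>) / (1 + a) * w) > - 1 / 2}"

definition in_S_halfplane :: "complex \<Rightarrow> real \<Rightarrow> (complex \<Rightarrow> complex) \<Rightarrow> (complex \<Rightarrow> complex) \<Rightarrow> bool" where
  "in_S_halfplane a \<gamma> h g \<longleftrightarrow> in_SH h g \<and> harmonic_f h g ` ball 0 1 = slanted_halfplane a \<gamma>"

end

theory Submission
  imports Defs "HOL-Complex_Analysis.Complex_Analysis"
begin

text \<open>Write \<open>1 + a = c e\<^sup>-\<^sup>i\<^sup>t\<close> with \<open>c = |1 + a|\<close>, \<open>t = \<gamma>\<^sub>a\<close>, and put \<open>u = e\<^sup>i\<^sup>(\<^sup>\<gamma>\<^sup>+\<^sup>t\<^sup>)\<close>.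
  As \<open>|u| = 1\<close>, \<open>Re (u conj g) = Re (u (conj u)\<^sup>2 g)\<close>, so \<open>f(\<bbbD>) \<subseteq> H\<^sup>a\<^sub>\<gamma>\<close> says that the analytic
  function \<open>G = u (h + (conj u)\<^sup>2 g) / c\<close> maps \<open>\<bbbD>\<close> into \<open>Re w > -1/2\<close>, and the hypothesis on
  \<open>g'(0)\<close> gives \<open>G(0) = 0\<close>, \<open>G'(0) = u\<close>. Then \<open>G / (1 + G)\<close> is a self-map of the disk fixing \<open>0\<close>
  with unimodular derivative there, hence the rotation \<open>z \<mapsto> u z\<close> by the Schwarz lemma;
  solving for \<open>G\<close> gives the formula.\<close>

lemma norm_one_plus_bounds:
  fixes a :: complex
  assumes "norm a < 1"
  shows "0 < norm (1 + a)" and "norm (1 + a) < 2"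
proof -
  show "0 < norm (1 + a)"
    using assms norm_diff_ineq [of 1 a] unfolding norm_one by linarith
  show "norm (1 + a) < 2"
    using assms norm_triangle_ineq [of 1 a] by simp
qed

lemma polar_form_Arg_cnj:
  fixes w :: complex
  shows "w = complex_of_real (norm w) * exp (- (\<i> * complex_of_real (Arg (cnj w))))"
proof -
  have "cnj w = complex_of_real (norm w) * exp (\<i> * complex_of_real (Arg (cnj w)))"
    by (metis complex_mod_cnj rcis_cmod_Arg rcis_def cis_conv_exp)
  then have "w = cnj (complex_of_real (norm w) * exp (\<i> * complex_of_real (Arg (cnj w))))"
    by (metis complex_cnj_cnj)
  then show ?thesis
    by (simp add: exp_cnj)
qed

lemma halfplane_coefficient_polar:
  fixes a :: complex and \<gamma> :: real
  assumes "1 + a \<noteq> 0"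
  shows "exp (\<i> * complex_of_real \<gamma>) / (1 + a)
           = exp (\<i> * complex_of_real (\<gamma> + Arg (1 + cnj a))) / complex_of_real (norm (1 + a))"
proof -
  have polar: "1 + a = complex_of_real (norm (1 + a)) * exp (- (\<i> * complex_of_real (Arg (1 + cnj a))))"
    by (metis complex_cnj_add complex_cnj_one polar_form_Arg_cnj)
  show ?thesis
    using assms by (subst polar) (simp add: exp_minus distrib_left exp_add field_simps)
qed

lemma Re_mult_cnj_unimodular:
  fixes u x y :: complex
  assumes "norm u = 1"
  shows "Re (u * (x + cnj y)) = Re (u * (x + cnj u ^ 2 * y))"
proof -
  have "cnj u * u = 1"
    by (metis assms complex_norm_square mult.commute of_real_1 power_one)
  then have "u * (cnj u ^ 2 * y) = cnj u * y"
    by (simp add: power2_eq_square algebra_simps)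
  moreover have "Re (u * cnj y) = Re (cnj u * y)"
    by (metis complex_cnj_cnj complex_cnj_mult cnj.sel(1))
  ultimately show ?thesis
    by (simp only: distrib_left plus_complex.sel)
qed

lemma norm_div_one_plus_lt_one:
  fixes w :: complex
  assumes "Re w > -1/2"
  shows "norm (w / (1 + w)) < 1"
proof -
  have "(norm w)\<^sup>2 = (Re w)\<^sup>2 + (Im w)\<^sup>2" "(norm (1 + w))\<^sup>2 = (1 + Re w)\<^sup>2 + (Im w)\<^sup>2"
    by (simp_all add: cmod_power2)
  then have "(norm w)\<^sup>2 < (norm (1 + w))\<^sup>2"
    using assms by (simp add: power2_eq_square algebra_simps)
  then have "norm w < norm (1 + w)"
    by (meson norm_ge_zero power_less_imp_less_base)
  then show ?thesis
    by (simp add: norm_divide divide_less_eq)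
qed

lemma halfplane_Schwarz_extremal:
  fixes G :: "complex \<Rightarrow> complex"
  assumes holG: "G holomorphic_on ball 0 1" and G0: "G 0 = 0"
    and ReG: "\<And>z. z \<in> ball 0 1 \<Longrightarrow> Re (G z) > -1/2"
    and dG: "(G has_field_derivative u) (at 0)" and nu: "norm u = 1"
    and z: "z \<in> ball 0 1"
  shows "G z = u * z / (1 - u * z)"
proof -
  have G1: "1 + G w \<noteq> 0" if "w \<in> ball 0 1" for w
  proof
    assume "1 + G w = 0"
    then have "G w = -1"
      by (simp add: add_eq_0_iff)
    with ReG [OF that] show False
      by simp
  qed
  define \<omega> where "\<omega> = (\<lambda>w. G w / (1 + G w))"
  have hol\<omega>: "\<omega> holomorphic_on ball 0 1"
    unfolding \<omega>_def by (intro holomorphic_intros holG) (use G1 in auto)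
  have \<omega>0: "\<omega> 0 = 0"
    by (simp add: \<omega>_def G0)
  have n\<omega>: "norm (\<omega> w) < 1" if "norm w < 1" for w
    unfolding \<omega>_def using that by (intro norm_div_one_plus_lt_one ReG) simp
  have "(\<omega> has_field_derivative (u * (1 + G 0) - G 0 * u) / ((1 + G 0) * (1 + G 0))) (at 0)"
    unfolding \<omega>_def using G1 [of 0] by (auto intro!: derivative_eq_intros dG)
  then have d\<omega>: "(\<omega> has_field_derivative u) (at 0)"
    by (simp add: G0)
  then have "deriv \<omega> 0 = u"
    by (rule DERIV_imp_deriv)
  then obtain \<alpha> where \<alpha>: "\<And>w. norm w < 1 \<Longrightarrow> \<omega> w = \<alpha> * w"
    using Schwarz_Lemma(3) [OF hol\<omega> \<omega>0 n\<omega>, of 0] nu by auto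
  have "((\<lambda>w. \<alpha> * w) has_field_derivative u) (at 0)"
    by (rule has_field_derivative_transform_within_open [OF d\<omega>, of "ball 0 1"]) (auto simp: \<alpha>)
  moreover have "((\<lambda>w. \<alpha> * w) has_field_derivative \<alpha>) (at 0)"
    by (auto intro!: derivative_eq_intros)
  ultimately have "\<alpha> = u"
    using DERIV_unique by blast
  then have "G z = u * z * (1 + G z)"
    using \<alpha> [of z] z G1 [OF z] by (simp add: \<omega>_def divide_eq_eq)
  then have "G z * (1 - u * z) = u * z"
    by (simp add: algebra_simps)
  moreover have "1 - u * z \<noteq> 0"
  proof
    assume "1 - u * z = 0"
    then have "norm (u * z) = 1"
      by (metis eq_iff_diff_eq_0 norm_one)
    with z nu show False
      by (simp add: norm_mult)
  qed
  ultimately show ?thesis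
    by (simp add: eq_divide_eq)
qed

lemma harmonic_halfplane_extremal:
  fixes h g :: "complex \<Rightarrow> complex" and u :: complex and c :: real
  assumes holh: "h holomorphic_on ball 0 1" and holg: "g holomorphic_on ball 0 1"
    and h0: "h 0 = 0" and g0: "g 0 = 0" and dh0: "deriv h 0 = 1"
    and dg0: "deriv g 0 = complex_of_real (c - 1) * u ^ 2"
    and halfplane: "\<And>z. z \<in> ball 0 1 \<Longrightarrow> Re (u / complex_of_real c * (h z + cnj (g z))) > -1/2"
    and nu: "norm u = 1" and c_pos: "0 < c"
    and z: "z \<in> ball 0 1"
  shows "h z + cnj u ^ 2 * g z = complex_of_real c * z / (1 - u * z)"
proof -
  define G where "G w = u * (h w + cnj u ^ 2 * g w) / complex_of_real c" for w
  have "Re (G w) > -1/2" if w: "w \<in> ball 0 1" for w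
  proof -
    have "-1/2 < Re (u / complex_of_real c * (h w + cnj (g w)))"
      using halfplane [OF w] .
    also have "\<dots> = Re (u * (h w + cnj (g w))) / c"
      by (simp only: times_divide_eq_left Re_divide_of_real)
    also have "\<dots> = Re (G w)"
      by (simp only: Re_mult_cnj_unimodular [OF nu] G_def Re_divide_of_real)
    finally show ?thesis .
  qed
  moreover have "G holomorphic_on ball 0 1"
    unfolding G_def by (intro holomorphic_intros holh holg) (use c_pos in auto)
  moreover have "G 0 = 0"
    by (simp add: G_def h0 g0)
  moreover have "(G has_field_derivative u) (at 0)"
  proof -
    have "(h has_field_derivative deriv h 0) (at 0)" "(g has_field_derivative deriv g 0) (at 0)"
      using holomorphic_derivI [OF holh] holomorphic_derivI [OF holg] by simp_all
    then have "(G has_field_derivative u * (deriv h 0 + cnj u ^ 2 * deriv g 0) / complex_of_real c) (at 0)"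
      unfolding G_def using c_pos by (auto intro!: derivative_eq_intros)
    moreover have "cnj u ^ 2 * u ^ 2 = 1"
      by (metis nu complex_norm_square mult.commute of_real_1 power_one power_mult_distrib)
    then have "deriv h 0 + cnj u ^ 2 * deriv g 0 = complex_of_real c"
      by (simp add: dh0 dg0 mult.left_commute del: of_real_diff) simp
    ultimately show ?thesis
      using c_pos by simp
  qed
  ultimately have G_rotation: "G z = u * z / (1 - u * z)"
    using halfplane_Schwarz_extremal nu z by blast
  have "u \<noteq> 0"
    using nu by auto
  then have "h z + cnj u ^ 2 * g z = complex_of_real c * G z / u"
    using c_pos by (simp add: G_def)
  also have "\<dots> = complex_of_real c * z / (1 - u * z)"
    using G_rotation \<open>u \<noteq> 0\<close> by simp
  finally show ?thesis .
qed

theorem proposition1: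
  fixes a :: complex and \<gamma> :: real and h g :: "complex \<Rightarrow> complex"
  assumes "a \<in> ball 0 1"
    and "0 \<le> \<gamma>" and "\<gamma> < 2 * pi"
    and "in_S_halfplane a \<gamma> h g"
    and "deriv g 0 = complex_of_real (norm (1 + a) - 1)
                     * exp (2 * \<i> * complex_of_real (\<gamma> + Arg (1 + cnj a)))"
  shows "norm (1 + a) - 1 \<in> {-1<..<1} \<and>
         norm (deriv g 0) < 1 \<and>
         (\<forall>z\<in>ball 0 1. h z + exp (- 2 * \<i> * complex_of_real (\<gamma> + Arg (1 + cnj a))) * g z
            = complex_of_real (1 + (norm (1 + a) - 1)) * z
              / (1 - exp (\<i> * complex_of_real (\<gamma> + Arg (1 + cnj a))) * z))"
proof -
  define c where "c = norm (1 + a)"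
  define u where "u = exp (\<i> * complex_of_real (\<gamma> + Arg (1 + cnj a)))"
  have c_pos: "0 < c" and c_lt_2: "c < 2"
    using norm_one_plus_bounds assms(1) by (simp_all add: c_def)
  have nu: "norm u = 1"
    by (simp add: u_def norm_exp)
  have dg0: "deriv g 0 = complex_of_real (c - 1) * u ^ 2"
    by (simp add: assms(5) c_def u_def power2_eq_square mult.assoc flip: exp_add)
  then have "norm (deriv g 0) = \<bar>c - 1\<bar>"
    by (simp add: norm_mult norm_power nu del: of_real_diff)
  then have coefficient_bounds: "c - 1 \<in> {-1<..<1}" "norm (deriv g 0) < 1"
    using c_pos c_lt_2 by auto
  have image: "harmonic_f h g ` ball 0 1 = slanted_halfplane a \<gamma>" and "in_SH h g"
    using assms(4) by (auto simp: in_S_halfplane_def)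
  have rotation: "exp (\<i> * complex_of_real \<gamma>) / (1 + a) = u / complex_of_real c"
    using halfplane_coefficient_polar c_pos by (auto simp: c_def u_def)
  have "Re (u / complex_of_real c * (h z + cnj (g z))) > -1/2" if "z \<in> ball 0 1" for z
  proof -
    have "harmonic_f h g z \<in> slanted_halfplane a \<gamma>"
      using image that by blast
    then show ?thesis
      unfolding slanted_halfplane_def harmonic_f_def rotation by simp
  qed
  then have "h z + cnj u ^ 2 * g z = complex_of_real c * z / (1 - u * z)" if "z \<in> ball 0 1" for z
    using harmonic_halfplane_extremal [OF _ _ _ _ _ dg0 _ nu c_pos that] \<open>in_SH h g\<close>
    by (auto simp: in_SH_def)
  moreover have "exp (- 2 * \<i> * complex_of_real (\<gamma> + Arg (1 + cnj a))) = cnj u ^ 2"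
    by (simp add: u_def exp_cnj power2_eq_square mult.assoc flip: exp_add)
  ultimately show ?thesis
    using coefficient_bounds by (simp add: c_def u_def)
qed

end
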